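(* Let $\mathcal{A}$ be a pOC with state set $Q$ whose underlying chain $\mathcal{X}$ is strongly connected, with trend $t>0$. Let $v$ be a potential and $|v|=v_{\max}-v_{\min}$. Let $$a:=\exp\left(-\frac{t^2}{2(|v|+t+1)^2}\right),$$ so that $0<a<1$. Let $c^{(0)}\ge|v|$ be an integer. Then $$[p^{(0)}(c^{(0)}){\downarrow}]\le\frac{a^{c^{(0)}}}{1-a}\quad\text{for all } p^{(0)}\in Q.$$ Moreover, if $c^{(0)}\ge6(|v|+t+1)^3/t^3$, then $[p^{(0)}(c^{(0)}){\downarrow}]\le1/2$ for all $p^{(0)}\in Q$.
   Context: A pOC is $\mathcal{A}=(Q,\delta^{=0},\delta^{>0},P^{=0},P^{>0})$ with the following components. - $\delta^{>0}\subseteq Q\times\{-1,0,1\}\times Q$ are the positive rules and $\delta^{=0}\subseteq Q\times\{0,1\}\times Q$ are the zero rules. Every state has both kinds of outgoing rule. - $P^{>0}$ and $P^{=0}$ are positive probability distributions over the outgoing rules of each state. $\mathcal{M}_\mathcal{A}$ is the Markov chain on configurations $p(i)$ with the following transitions: - $p(0)\to q(c)$ with probability $P^{=0}(p,c,q)$; - for $i\ge1$, $p(i)\to q(i+c)$ with probability $P^{>0}(p,c,q)$. $[r(c){\downarrow}]$ is the probability that a run initiated in $r(c)$ eventually reaches counter value zero. $\mathcal{X}$ is the finite Markov chain on $Q$ with transition matrix $A_{pq}=\sum_cP^{>0}(p,c,q)$. With $\alpha$ its invariant distribution and $s_p=\sum_{(p,c,q)\in\delta^{>0}}P^{>0}(p,c,q)c$,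 the trend is $t=\alpha s$. A potential is $v\in\mathbb{R}^Q$ with $s+Av=v+\mathbf{1}t$. $v_{\max}$ and $v_{\min}$ are its largest and smallest components. *)

theory Defs
  imports Complex_Main
begin

text \<open>Rules are encoded by their probabilities:
  Pz p c q = P^{=0}(p,c,q) and Pp p c q = P^{>0}(p,c,q); the rule sets are the supports
  (delta = {(p,c,q). P(p,c,q) > 0}).\<close>

definition pOC :: "('q::finite \<Rightarrow> int \<Rightarrow> 'q \<Rightarrow> real) \<Rightarrow> ('q \<Rightarrow> int \<Rightarrow> 'q \<Rightarrow> real) \<Rightarrow> bool" where
  "pOC Pz Pp \<longleftrightarrow>
     (\<forall>p c q. Pz p c q \<ge> 0 \<and> (Pz p c q \<noteq> 0 \<longrightarrow> c \<in> {0, 1})) \<and>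
     (\<forall>p c q. Pp p c q \<ge> 0 \<and> (Pp p c q \<noteq> 0 \<longrightarrow> c \<in> {-1, 0, 1})) \<and>
     (\<forall>p. (\<Sum>q\<in>UNIV. \<Sum>c\<in>{0, 1}. Pz p c q) = 1) \<and>
     (\<forall>p. (\<Sum>q\<in>UNIV. \<Sum>c\<in>{-1, 0, 1}. Pp p c q) = 1)"

definition trans_mat :: "('q::finite \<Rightarrow> int \<Rightarrow> 'q \<Rightarrow> real) \<Rightarrow> 'q \<Rightarrow> 'q \<Rightarrow> real" where
  "trans_mat Pp p q = (\<Sum>c\<in>{-1, 0, 1}. Pp p c q)"

definition drift :: "('q::finite \<Rightarrow> int \<Rightarrow> 'q \<Rightarrow> real) \<Rightarrow> 'q \<Rightarrow> real" where
  "drift Pp p = (\<Sum>q\<in>UNIV. \<Sum>c\<in>{-1, 0, 1}. Pp p c q * of_int c)"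

definition strongly_connected :: "('q::finite \<Rightarrow> 'q \<Rightarrow> real) \<Rightarrow> bool" where
  "strongly_connected A \<longleftrightarrow> (\<forall>p q. (p, q) \<in> {(x, y). A x y > 0}\<^sup>*)"

definition invariant_dist :: "('q::finite \<Rightarrow> 'q \<Rightarrow> real) \<Rightarrow> ('q \<Rightarrow> real) \<Rightarrow> bool" where
  "invariant_dist A \<alpha> \<longleftrightarrow> (\<forall>p. \<alpha> p \<ge> 0) \<and> (\<Sum>p\<in>UNIV. \<alpha> p) = 1 \<and>
     (\<forall>q. (\<Sum>p\<in>UNIV. \<alpha> p * A p q) = \<alpha> q)"

definition trend :: "('q::finite \<Rightarrow> int \<Rightarrow> 'q \<Rightarrow> real) \<Rightarrow> ('q \<Rightarrow> real) \<Rightarrow> real" where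
  "trend Pp \<alpha> = (\<Sum>p\<in>UNIV. \<alpha> p * drift Pp p)"

definition potential :: "('q::finite \<Rightarrow> int \<Rightarrow> 'q \<Rightarrow> real) \<Rightarrow> real \<Rightarrow> ('q \<Rightarrow> real) \<Rightarrow> bool" where
  "potential Pp t v \<longleftrightarrow> (\<forall>p. drift Pp p + (\<Sum>q\<in>UNIV. trans_mat Pp p q * v q) = v p + t)"

text \<open>Probability that a run of M_A from p(i) has reached counter value 0 within n steps
  (time 0 included). Before reaching 0 only positive rules are used.\<close>
fun hit_within :: "('q::finite \<Rightarrow> int \<Rightarrow> 'q \<Rightarrow> real) \<Rightarrow> nat \<Rightarrow> 'q \<Rightarrow> nat \<Rightarrow> real" where
  "hit_within Pp 0 p i = (if i = 0 then 1 else 0)"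
| "hit_within Pp (Suc n) p i = (if i = 0 then 1 else
     (\<Sum>q\<in>UNIV. \<Sum>c\<in>{-1, 0, 1}. Pp p c q * hit_within Pp n q (nat (int i + c))))"

text \<open>[p(i)\<down>]: probability of eventually reaching counter value zero
  (= limit of the increasing sequence of n-step hitting probabilities).\<close>
definition reach_zero :: "('q::finite \<Rightarrow> int \<Rightarrow> 'q \<Rightarrow> real) \<Rightarrow> 'q \<Rightarrow> nat \<Rightarrow> real" where
  "reach_zero Pp p i = (SUP n. hit_within Pp n p i)"

end

theory Submission
  imports Defs
begin

text \<open>For \<beta> > 0, the potential makes exp (-\<beta> (i + v p)) a supermartingale while the counter
  i is positive: expanding exp to second order, the potential equation reduces the first-order
  term to -\<beta> t, which dominates the second-order term \<beta>^2 (|v| + 1)^2 once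
  \<beta> = t^2 / (2 (|v| + t + 1)^2). Hence the probability of reaching zero from p(c) is at most
  exp (-\<beta> (c - |v|)). Comparing this with the geometric tail of a = exp (-\<beta>), resp. noting
  \<beta> (c - |v|) \<ge> 2 for large c, gives both bounds.\<close>

lemma exp_le_quadratic:
  fixes y :: real
  assumes "y \<le> 1"
  shows "exp y \<le> 1 + y + y\<^sup>2"
proof (cases "y \<ge> 0")
  case True
  then show ?thesis using exp_bound assms by blast
next
  case False
  define z where "z = - y"
  have "z \<ge> 0" using False z_def by auto
  have pos: "1 - z + z\<^sup>2 > 0"
    using zero_le_power2[of "z - 1/2"] by (simp add: power2_eq_square algebra_simps)
  have "1 + z ^ 3 = (1 - z + z\<^sup>2) * (1 + z)"
    by (simp add: algebra_simps power2_eq_square power3_eq_cube)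
  also have "\<dots> \<le> (1 - z + z\<^sup>2) * exp z"
    using exp_ge_add_one_self[of z] pos by (simp add: mult_left_mono)
  finally have "1 \<le> (1 - z + z\<^sup>2) * exp z" using zero_le_power[OF \<open>z \<ge> 0\<close>, of 3] by linarith
  then have "exp (- z) \<le> 1 - z + z\<^sup>2" by (simp add: exp_minus field_simps)
  then show ?thesis using z_def by simp
qed

lemma pOC_Pp_nonneg: "pOC Pz Pp \<Longrightarrow> Pp p c q \<ge> 0"
  unfolding pOC_def by blast

lemma pOC_Pp_sum: "pOC Pz Pp \<Longrightarrow> (\<Sum>q\<in>UNIV. \<Sum>c\<in>{-1, 0, 1}. Pp p c q) = 1"
  unfolding pOC_def by blast

lemma drift_le_one:
  assumes "pOC Pz Pp"
  shows "drift Pp p \<le> 1"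
proof -
  have "drift Pp p \<le> (\<Sum>q\<in>UNIV. \<Sum>c\<in>{-1, 0, 1}. Pp p c q)"
    unfolding drift_def
    using pOC_Pp_nonneg[OF assms] by (intro sum_mono) (auto simp: mult_left_le)
  then show ?thesis using pOC_Pp_sum[OF assms] by simp
qed

lemma trend_le_one:
  assumes "pOC Pz Pp" and "invariant_dist (trans_mat Pp) \<alpha>"
  shows "trend Pp \<alpha> \<le> 1"
proof -
  have "trend Pp \<alpha> \<le> (\<Sum>p\<in>UNIV. \<alpha> p)"
    unfolding trend_def using assms(2) drift_le_one[OF assms(1)]
    by (intro sum_mono) (simp add: invariant_dist_def mult_left_le)
  also have "\<dots> = 1" using assms(2) unfolding invariant_dist_def by blast
  finally show ?thesis .
qed

lemma exp_potential_step_le_one: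
  fixes Pp :: "'q::finite \<Rightarrow> int \<Rightarrow> 'q \<Rightarrow> real" and v :: "'q \<Rightarrow> real"
  assumes poc: "pOC Pz Pp" and pot: "potential Pp t v"
    and spread: "\<And>p q. \<bar>v q - v p\<bar> \<le> d"
    and "0 \<le> b" and bM: "b * (d + 1) \<le> 1" and bM2: "b * (d + 1)\<^sup>2 \<le> t"
  shows "(\<Sum>q\<in>UNIV. \<Sum>c\<in>{-1, 0, 1}. Pp p c q * exp (- b * (of_int c + v q - v p))) \<le> 1"
proof -
  let ?E = "b\<^sup>2 * (d + 1)\<^sup>2"
  have term_le: "Pp p c q * exp (- b * (of_int c + v q - v p))
      \<le> Pp p c q * (1 - b * of_int c - b * v q + b * v p + ?E)" if "c \<in> {-1, 0, 1}" for c q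
  proof -
    define X where "X = - b * (of_int c + v q - v p)"
    have "\<bar>of_int c + v q - v p\<bar> \<le> d + 1" using that spread[of p q] by auto
    then have X_le: "\<bar>X\<bar> \<le> b * (d + 1)"
      unfolding X_def using \<open>0 \<le> b\<close> by (simp add: abs_mult mult_left_mono)
    then have "X\<^sup>2 \<le> ?E"
      by (metis abs_ge_zero power2_abs power_mono power_mult_distrib)
    moreover have "exp X \<le> 1 + X + X\<^sup>2" using X_le bM by (intro exp_le_quadratic) linarith
    ultimately have "exp X \<le> 1 - b * of_int c - b * v q + b * v p + ?E"
      unfolding X_def by (simp add: algebra_simps)
    then show ?thesis using pOC_Pp_nonneg[OF poc] unfolding X_def by (simp add: mult_left_mono)
  qed
  have "(\<Sum>q\<in>UNIV. \<Sum>c\<in>{-1, 0, 1}. Pp p c q * exp (- b * (of_int c + v q - v p)))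
      \<le> (\<Sum>q\<in>UNIV. \<Sum>c\<in>{-1, 0, 1}. Pp p c q * (1 - b * of_int c - b * v q + b * v p + ?E))"
    using term_le by (intro sum_mono) auto
  also have "\<dots> = (1 + b * v p + ?E) * (\<Sum>q\<in>UNIV. \<Sum>c\<in>{-1, 0, 1}. Pp p c q)
      - b * drift Pp p - b * (\<Sum>q\<in>UNIV. trans_mat Pp p q * v q)"
    by (simp add: drift_def trans_mat_def sum_distrib_left sum_distrib_right sum_subtractf
        sum.distrib algebra_simps)
  also have "\<dots> = 1 + ?E - b * t"
    using pOC_Pp_sum[OF poc, of p] pot unfolding potential_def
    by (simp add: algebra_simps) (metis distrib_left)
  also have "\<dots> \<le> 1"
    using mult_left_mono[OF bM2 \<open>0 \<le> b\<close>] by (simp add: power2_eq_square algebra_simps)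
  finally show ?thesis .
qed

lemma hit_within_le_exp:
  fixes Pp :: "'q::finite \<Rightarrow> int \<Rightarrow> 'q \<Rightarrow> real" and v :: "'q \<Rightarrow> real"
  assumes step: "\<And>p. (\<Sum>q\<in>UNIV. \<Sum>c\<in>{-1, 0, 1}. Pp p c q * exp (- b * (of_int c + v q - v p))) \<le> 1"
    and nonneg: "\<And>p c q. Pp p c q \<ge> 0" and v_le: "\<And>p. v p \<le> V" and "b \<ge> 0"
  shows "hit_within Pp n p i \<le> exp (- b * (real i + v p - V))"
proof (induction n arbitrary: p i)
  case 0
  have "b * (v p - V) \<le> 0" using \<open>b \<ge> 0\<close> v_le[of p] by (simp add: mult_nonneg_nonpos)
  then show ?case by simp
next
  case (Suc n)
  show ?case
  proof (cases "i = 0")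
    case True
    have "b * (v p - V) \<le> 0" using \<open>b \<ge> 0\<close> v_le[of p] by (simp add: mult_nonneg_nonpos)
    then show ?thesis using True by simp
  next
    case False
    define E where "E = exp (- b * (real i + v p - V))"
    have shift: "exp (- b * (real (nat (int i + c)) + v q - V)) = E * exp (- b * (of_int c + v q - v p))"
      if "c \<in> {-1, 0, 1}" for c q
    proof -
      have "real (nat (int i + c)) = real i + of_int c" using that False by auto
      then show ?thesis unfolding E_def mult_exp_exp by (simp add: algebra_simps)
    qed
    have "hit_within Pp (Suc n) p i
        = (\<Sum>q\<in>UNIV. \<Sum>c\<in>{-1, 0, 1}. Pp p c q * hit_within Pp n q (nat (int i + c)))"
      using False by simp
    also have "\<dots> \<le> (\<Sum>q\<in>UNIV. \<Sum>c\<in>{-1, 0, 1}. Pp p c q * exp (- b * (real (nat (int i + c)) + v q - V)))"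
      by (intro sum_mono mult_left_mono Suc nonneg)
    also have "\<dots> = E * (\<Sum>q\<in>UNIV. \<Sum>c\<in>{-1, 0, 1}. Pp p c q * exp (- b * (of_int c + v q - v p)))"
      unfolding sum_distrib_left by (intro sum.cong refl) (metis shift mult.left_commute)
    also have "\<dots> \<le> E" using step[of p] by (simp add: E_def mult_left_le)
    finally show ?thesis unfolding E_def .
  qed
qed

lemma reach_zero_le_exp:
  fixes Pp :: "'q::finite \<Rightarrow> int \<Rightarrow> 'q \<Rightarrow> real" and v :: "'q \<Rightarrow> real"
  assumes poc: "pOC Pz Pp" and pot: "potential Pp t v"
    and spread: "\<And>p q. \<bar>v q - v p\<bar> \<le> d"
    and "0 \<le> b" and "b * (d + 1) \<le> 1" and "b * (d + 1)\<^sup>2 \<le> t"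
  shows "reach_zero Pp p i \<le> exp (- b * (real i - d))"
  unfolding reach_zero_def
proof (rule cSUP_least)
  fix n
  have "Max (range v) \<in> range v" by (rule Max_in) auto
  then obtain q where q: "v q = Max (range v)" by (metis imageE)
  have "hit_within Pp n p i \<le> exp (- b * (real i + v p - v q))"
    using exp_potential_step_le_one[OF poc pot spread \<open>0 \<le> b\<close> assms(5,6)]
      pOC_Pp_nonneg[OF poc] \<open>0 \<le> b\<close> q
    by (intro hit_within_le_exp) auto
  also have "\<dots> \<le> exp (- b * (real i - d))"
    using spread[of p q] \<open>0 \<le> b\<close> by (simp add: mult_left_mono)
  finally show "hit_within Pp n p i \<le> exp (- b * (real i - d))" .
qed simp

lemma decay_rate_bounds:
  fixes t d :: real
  assumes "0 < t" "t \<le> 1" "0 \<le> d"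
  defines "\<beta> \<equiv> t\<^sup>2 / (2 * (d + t + 1)\<^sup>2)"
  shows "0 < \<beta>" "\<beta> * (d + 1) \<le> 1" "\<beta> * (d + 1)\<^sup>2 \<le> t" "\<beta> \<le> 1 / 8"
proof -
  define K where "K = d + t + 1"
  have "1 \<le> K" "d + 1 \<le> K" "2 * t \<le> K" using assms(1-3) unfolding K_def by auto
  have \<beta>: "\<beta> = t\<^sup>2 / (2 * K\<^sup>2)" unfolding \<beta>_def K_def ..
  show "0 < \<beta>" unfolding \<beta> using \<open>0 < t\<close> \<open>1 \<le> K\<close> by simp
  have "\<beta> * (d + 1)\<^sup>2 \<le> \<beta> * K\<^sup>2"
    using \<open>0 < \<beta>\<close> \<open>d + 1 \<le> K\<close> assms(3) by (intro mult_left_mono power_mono) auto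
  also have "\<dots> = t\<^sup>2 / 2" unfolding \<beta> using \<open>1 \<le> K\<close> by simp
  finally have "\<beta> * (d + 1)\<^sup>2 \<le> t\<^sup>2 / 2" .
  moreover have "t\<^sup>2 \<le> t" using assms(1,2) by (simp add: power2_eq_square mult_left_le)
  moreover have "d + 1 \<le> (d + 1)\<^sup>2" using assms(3) by (simp add: power2_eq_square)
  moreover have "\<beta> * (d + 1) \<le> \<beta> * (d + 1)\<^sup>2"
    using \<open>0 < \<beta>\<close> \<open>d + 1 \<le> (d + 1)\<^sup>2\<close> by (simp add: mult_left_mono)
  ultimately show "\<beta> * (d + 1)\<^sup>2 \<le> t" and "\<beta> * (d + 1) \<le> 1"
    using assms(1,2) by auto
  have "(2 * t)\<^sup>2 \<le> K\<^sup>2" using \<open>2 * t \<le> K\<close> \<open>0 < t\<close> by (intro power_mono) auto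
  then show "\<beta> \<le> 1 / 8" unfolding \<beta> using \<open>1 \<le> K\<close> by (simp add: field_simps)
qed

lemma exp_shift_le_geometric_tail:
  fixes \<beta> d :: real
  assumes "0 < \<beta>" "\<beta> \<le> 1 / 3" "\<beta> * d \<le> 1"
  shows "exp (- \<beta> * (real c - d)) \<le> exp (- \<beta>) ^ c / (1 - exp (- \<beta>))"
proof -
  have "exp (\<beta> * d) \<le> exp 1" using assms(3) by simp
  also have "\<dots> \<le> 3" by (rule exp_le)
  moreover have "0 < 1 - exp (- \<beta>)" "1 - exp (- \<beta>) \<le> \<beta>"
    using assms(1) exp_ge_add_one_self[of "- \<beta>"] by auto
  ultimately have "exp (\<beta> * d) * (1 - exp (- \<beta>)) \<le> 1"
    using assms(2) mult_mono[of "exp (\<beta> * d)" 3 "1 - exp (- \<beta>)" \<beta>] by linarith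
  moreover have "exp (- \<beta> * (real c - d)) = exp (- \<beta>) ^ c * exp (\<beta> * d)"
    by (simp add: exp_of_nat_mult[symmetric] mult_exp_exp algebra_simps)
  ultimately have "exp (- \<beta> * (real c - d)) * (1 - exp (- \<beta>)) \<le> exp (- \<beta>) ^ c"
    by (simp add: mult_left_le mult.assoc)
  then show ?thesis using \<open>0 < 1 - exp (- \<beta>)\<close> by (simp add: le_divide_eq)
qed

lemma exp_decay_rate_le_half:
  fixes t d c :: real
  assumes "0 < t" "t \<le> 1" "0 \<le> d" and c: "6 * (d + t + 1) ^ 3 / t ^ 3 \<le> c"
  shows "exp (- (t\<^sup>2 / (2 * (d + t + 1)\<^sup>2)) * (c - d)) \<le> 1 / 2"
proof -
  define K where "K = d + t + 1"
  define \<beta> where "\<beta> = t\<^sup>2 / (2 * K\<^sup>2)"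
  note bounds = decay_rate_bounds[OF assms(1-3), folded K_def, folded \<beta>_def]
  have "3 \<le> 3 * K / t" using assms(1-3) unfolding K_def by (simp add: le_divide_eq)
  also have "\<dots> = \<beta> * (6 * K ^ 3 / t ^ 3)"
    unfolding \<beta>_def using assms(1) \<open>3 \<le> 3 * K / t\<close>
    by (auto simp: field_simps power2_eq_square power3_eq_cube)
  also have "\<dots> \<le> \<beta> * c" using c bounds(1) unfolding K_def by (intro mult_left_mono) auto
  finally have "2 \<le> \<beta> * (c - d)" using bounds(1,2) by (simp add: algebra_simps)
  then have "exp (- \<beta> * (c - d)) \<le> exp (- 2)" by simp
  also have "\<dots> \<le> 1 / 2" using exp_ge_add_one_self[of 2] by (simp add: exp_minus field_simps)
  finally show ?thesis unfolding \<beta>_def K_def by simp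
qed

theorem mainTheorem15:
  fixes Pz Pp :: "'q::finite \<Rightarrow> int \<Rightarrow> 'q \<Rightarrow> real"
    and \<alpha> v :: "'q \<Rightarrow> real" and t :: real and c0 :: nat
  assumes "pOC Pz Pp"
    and "strongly_connected (trans_mat Pp)"
    and "invariant_dist (trans_mat Pp) \<alpha>"
    and "t = trend Pp \<alpha>"
    and "t > 0"
    and "potential Pp t v"
    and "real c0 \<ge> Max (range v) - Min (range v)"
  shows "(\<forall>p0. reach_zero Pp p0 c0 \<le>
            exp (- (t\<^sup>2 / (2 * (Max (range v) - Min (range v) + t + 1)\<^sup>2))) ^ c0
            / (1 - exp (- (t\<^sup>2 / (2 * (Max (range v) - Min (range v) + t + 1)\<^sup>2)))))
       \<and> (real c0 \<ge> 6 * (Max (range v) - Min (range v) + t + 1) ^ 3 / t ^ 3 \<longrightarrow>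
            (\<forall>p0. reach_zero Pp p0 c0 \<le> 1 / 2))"
proof -
  define d where "d = Max (range v) - Min (range v)"
  define \<beta> where "\<beta> = t\<^sup>2 / (2 * (d + t + 1)\<^sup>2)"
  have v_range: "Min (range v) \<le> v p" "v p \<le> Max (range v)" for p
    by (auto intro: Min_le Max_ge)
  have spread: "\<bar>v q - v p\<bar> \<le> d" for p q
    using v_range[of p] v_range[of q] unfolding d_def by linarith
  have "t \<le> 1" using trend_le_one[OF assms(1,3)] assms(4) by simp
  have "0 \<le> d" using v_range unfolding d_def by (meson order_trans diff_ge_0_iff_ge)
  note bounds = decay_rate_bounds[OF assms(5) \<open>t \<le> 1\<close> \<open>0 \<le> d\<close>, folded \<beta>_def]
  have reach: "reach_zero Pp p0 c0 \<le> exp (- \<beta> * (real c0 - d))" for p0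
    using bounds by (intro reach_zero_le_exp[OF assms(1,6) spread]) auto
  have "\<beta> * d \<le> 1" using bounds(2) \<open>0 < \<beta>\<close> by (simp add: algebra_simps)
  have "reach_zero Pp p0 c0 \<le> exp (- \<beta>) ^ c0 / (1 - exp (- \<beta>))" for p0
    using reach[of p0] exp_shift_le_geometric_tail[of \<beta> d c0] bounds \<open>\<beta> * d \<le> 1\<close> by linarith
  moreover have "reach_zero Pp p0 c0 \<le> 1 / 2" if "6 * (d + t + 1) ^ 3 / t ^ 3 \<le> real c0" for p0
    using reach[of p0] exp_decay_rate_le_half[OF assms(5) \<open>t \<le> 1\<close> \<open>0 \<le> d\<close> that]
    unfolding \<beta>_def by linarith
  ultimately show ?thesis unfolding \<beta>_def d_def by auto
qed

end
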